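(* Let $K$ be a field, $m\ge2$, $d_1,\ldots,d_m$ positive integers, and $I_2(D)\subset K[x_1,\ldots,x_m,y_1,\ldots,y_m]$ the ideal generated by the $2$-minors of $D=\begin{pmatrix}x_1^{d_1}&\cdots&x_m^{d_m}\\ y_1^{d_1}&\cdots&y_m^{d_m}\end{pmatrix}$. Then $I_2(D)$ is prime if and only if $\gcd(d_i,d_j)=1$ for every $1\le i<j\le m$. *)

theory Defs
  imports "HOL-Library.Poly_Mapping"
begin

text \<open>Multivariate polynomials over a commutative ring 'a in variables of type 'v:
  a polynomial is a finitely supported map from monomials (finitely supported
  exponent vectors) to coefficients; multiplication is convolution.\<close>

type_synonym ('v, 'a) mpoly = "('v \<Rightarrow>\<^sub>0 nat) \<Rightarrow>\<^sub>0 'a"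

definition var_pow :: "'v \<Rightarrow> nat \<Rightarrow> ('v, 'a::comm_ring_1) mpoly" where
  "var_pow v k = Poly_Mapping.single (Poly_Mapping.single v k) 1"

definition polys_in_vars :: "'v set \<Rightarrow> ('v, 'a::comm_ring_1) mpoly set" where
  "polys_in_vars V = {p. \<forall>t\<in>Poly_Mapping.keys p. Poly_Mapping.keys t \<subseteq> V}"

definition ideal_gen_in :: "'r::comm_ring_1 set \<Rightarrow> 'r set \<Rightarrow> 'r set" where
  "ideal_gen_in R G = {p. \<exists>F c. finite F \<and> F \<subseteq> G \<and> (\<forall>g\<in>F. c g \<in> R) \<and> p = (\<Sum>g\<in>F. c g * g)}"

text \<open>A prime ideal I of the ring R (I is assumed to be an ideal of R).\<close>
definition prime_ideal_in :: "'r::comm_ring_1 set \<Rightarrow> 'r set \<Rightarrow> bool" where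
  "prime_ideal_in R I \<longleftrightarrow> I \<subseteq> R \<and> 1 \<notin> I \<and> (\<forall>a\<in>R. \<forall>b\<in>R. a * b \<in> I \<longrightarrow> a \<in> I \<or> b \<in> I)"

text \<open>Variables: Inl i stands for x_i, Inr i for y_i.\<close>
definition xy_vars :: "nat \<Rightarrow> (nat + nat) set" where
  "xy_vars m = Inl ` {1..m} \<union> Inr ` {1..m}"

definition minors2 :: "nat \<Rightarrow> (nat \<Rightarrow> nat) \<Rightarrow> (nat + nat, 'a::comm_ring_1) mpoly set" where
  "minors2 m d = {var_pow (Inl i) (d i) * var_pow (Inr j) (d j) - var_pow (Inl j) (d j) * var_pow (Inr i) (d i)
                  | i j. 1 \<le> i \<and> i < j \<and> j \<le> m}"

end

theory Submission
  imports Defs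
begin

text \<open>If the d_i are pairwise coprime, the monomial map x_i \<mapsto> s^{e_i} z_i, y_i \<mapsto> t^{e_i} z_i with
  e_i = \<Prod>_{k \<noteq> i} d_k kills every 2-minor, because e_i d_i = \<Prod>_k d_k.  Modulo the minors every
  polynomial reduces to one supported on monomials divisible by no x_i^{d_i} y_j^{d_j} (i < j), and by
  coprimality the map is injective on such monomials; hence the ideal is the kernel of a map into a
  domain, so it is prime.  Conversely, if g = gcd(d_i, d_j) > 1, write d_i = g a, d_j = g b and
  U = x_i^a y_j^b, W = x_j^b y_i^a: the minor U^g - W^g factors as (U - W)(U^{g-1} + \<dots> + W^{g-1}).
  Neither factor lies in the ideal: every monomial of an element of the ideal has some x_k-exponent
  at least d_k, whereas all x_k-exponents in both factors are below d_k.\<close>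

lemma poly_mapping_sum_single_lookup:
  "p = (\<Sum>t\<in>Poly_Mapping.keys p. Poly_Mapping.single t (Poly_Mapping.lookup p t))"
  by (rule poly_mapping_eqI) (auto simp: lookup_sum lookup_single when_def in_keys_iff sum.delta)

definition map_monomials :: "('k \<Rightarrow> 'l) \<Rightarrow> ('k \<Rightarrow>\<^sub>0 'b::comm_monoid_add) \<Rightarrow> ('l \<Rightarrow>\<^sub>0 'b)" where
  "map_monomials \<psi> p = (\<Sum>t\<in>Poly_Mapping.keys p. Poly_Mapping.single (\<psi> t) (Poly_Mapping.lookup p t))"

lemma map_monomials_eq_sum_superset:
  assumes "finite S" "Poly_Mapping.keys p \<subseteq> S"
  shows "map_monomials \<psi> p = (\<Sum>t\<in>S. Poly_Mapping.single (\<psi> t) (Poly_Mapping.lookup p t))"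
  unfolding map_monomials_def by (rule sum.mono_neutral_left) (use assms in \<open>auto simp: in_keys_iff\<close>)

lemma map_monomials_add: "map_monomials \<psi> (p + q) = map_monomials \<psi> p + map_monomials \<psi> q"
proof -
  let ?S = "Poly_Mapping.keys p \<union> Poly_Mapping.keys q"
  have "map_monomials \<psi> (p + q) = (\<Sum>t\<in>?S. Poly_Mapping.single (\<psi> t) (Poly_Mapping.lookup (p + q) t))"
    by (rule map_monomials_eq_sum_superset) (use keys_add[of p q] in auto)
  also have "\<dots> = (\<Sum>t\<in>?S. Poly_Mapping.single (\<psi> t) (Poly_Mapping.lookup p t))
     + (\<Sum>t\<in>?S. Poly_Mapping.single (\<psi> t) (Poly_Mapping.lookup q t))"
    by (simp add: lookup_add single_add sum.distrib)
  also have "\<dots> = map_monomials \<psi> p + map_monomials \<psi> q"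
    by (subst (1 2) map_monomials_eq_sum_superset[of ?S]) auto
  finally show ?thesis .
qed

lemma map_monomials_zero [simp]: "map_monomials \<psi> 0 = 0"
  by (simp add: map_monomials_def)

lemma map_monomials_single [simp]:
  "map_monomials \<psi> (Poly_Mapping.single t c) = Poly_Mapping.single (\<psi> t) c"
  by (simp add: map_monomials_def)

lemma map_monomials_diff:
  "map_monomials \<psi> ((p :: 'k \<Rightarrow>\<^sub>0 'b::ab_group_add) - q) = map_monomials \<psi> p - map_monomials \<psi> q"
proof -
  have "map_monomials \<psi> (- q) = - map_monomials \<psi> q"
    by (simp add: map_monomials_def single_uminus sum_negf)
  then show ?thesis
    using map_monomials_add[of \<psi> p "- q"] by simp
qed

lemma map_monomials_sum: "map_monomials \<psi> (\<Sum>i\<in>A. f i) = (\<Sum>i\<in>A. map_monomials \<psi> (f i))"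
  by (induction A rule: infinite_finite_induct) (auto simp: map_monomials_add)

lemma map_monomials_mult:
  fixes p q :: "('k::monoid_add) \<Rightarrow>\<^sub>0 ('b::comm_semiring_1)"
  assumes hom: "\<And>s t. \<psi> (s + t) = (\<psi> s + \<psi> t :: 'l::monoid_add)"
  shows "map_monomials \<psi> (p * q) = map_monomials \<psi> p * map_monomials \<psi> q"
proof -
  have "p * q = (\<Sum>s\<in>Poly_Mapping.keys p. \<Sum>t\<in>Poly_Mapping.keys q.
       Poly_Mapping.single (s + t) (Poly_Mapping.lookup p s * Poly_Mapping.lookup q t))"
    by (subst (1) poly_mapping_sum_single_lookup, subst (1) poly_mapping_sum_single_lookup[of q])
      (simp add: sum_product mult_single)
  then have "map_monomials \<psi> (p * q) = (\<Sum>s\<in>Poly_Mapping.keys p. \<Sum>t\<in>Poly_Mapping.keys q.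
       Poly_Mapping.single (\<psi> s + \<psi> t) (Poly_Mapping.lookup p s * Poly_Mapping.lookup q t))"
    by (simp add: map_monomials_sum hom)
  also have "\<dots> = map_monomials \<psi> p * map_monomials \<psi> q"
    by (simp add: map_monomials_def sum_product mult_single)
  finally show ?thesis .
qed

lemma map_monomials_eq_0_inj_on_keys:
  assumes "inj_on \<psi> (Poly_Mapping.keys p)" "map_monomials \<psi> p = 0"
  shows "p = 0"
proof (rule ccontr)
  assume "p \<noteq> 0"
  then obtain t where t: "t \<in> Poly_Mapping.keys p"
    by (metis keys_eq_empty equals0I)
  have "Poly_Mapping.lookup (map_monomials \<psi> p) (\<psi> t)
      = (\<Sum>u\<in>Poly_Mapping.keys p. if u = t then Poly_Mapping.lookup p t else 0)"
    unfolding map_monomials_def lookup_sum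
    by (rule sum.cong) (use assms(1) t in \<open>auto simp: lookup_single when_def inj_on_eq_iff\<close>)
  then show False
    using assms(2) t by (simp add: in_keys_iff)
qed

lemma polys_in_vars_zero [simp]: "0 \<in> polys_in_vars V"
  by (simp add: polys_in_vars_def)

lemma polys_in_vars_single:
  "Poly_Mapping.keys t \<subseteq> V \<Longrightarrow> Poly_Mapping.single t c \<in> polys_in_vars V"
  by (simp add: polys_in_vars_def)

lemma polys_in_vars_one [simp]: "1 \<in> polys_in_vars V"
  by (simp add: polys_in_vars_def)

lemma polys_in_vars_const: "Poly_Mapping.single 0 c \<in> polys_in_vars V"
  by (simp add: polys_in_vars_single)

lemma polys_in_vars_add:
  "p \<in> polys_in_vars V \<Longrightarrow> q \<in> polys_in_vars V \<Longrightarrow> p + q \<in> polys_in_vars V"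
  unfolding polys_in_vars_def using keys_add[of p q] by blast

lemma polys_in_vars_diff:
  "p \<in> polys_in_vars V \<Longrightarrow> q \<in> polys_in_vars V \<Longrightarrow> (p :: ('v, 'a::comm_ring_1) mpoly) - q \<in> polys_in_vars V"
  unfolding polys_in_vars_def using keys_diff[of p q] by blast

lemma polys_in_vars_mult:
  assumes "p \<in> polys_in_vars V" "q \<in> polys_in_vars V"
  shows "(p :: ('v, 'a::comm_ring_1) mpoly) * q \<in> polys_in_vars V"
  unfolding polys_in_vars_def mem_Collect_eq
proof
  fix t assume "t \<in> Poly_Mapping.keys (p * q)"
  then obtain a b where "t = a + b" "a \<in> Poly_Mapping.keys p" "b \<in> Poly_Mapping.keys q"
    using keys_mult[of p q] by blast
  then show "Poly_Mapping.keys t \<subseteq> V"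
    using assms keys_add[of a b] unfolding polys_in_vars_def by blast
qed

lemma polys_in_vars_sum:
  "(\<And>i. i \<in> A \<Longrightarrow> f i \<in> polys_in_vars V) \<Longrightarrow> (\<Sum>i\<in>A. f i) \<in> polys_in_vars V"
  by (induction A rule: infinite_finite_induct) (auto intro: polys_in_vars_add)

lemma polys_in_vars_power:
  "p \<in> polys_in_vars V \<Longrightarrow> (p :: ('v, 'a::comm_ring_1) mpoly) ^ n \<in> polys_in_vars V"
  by (induction n) (auto intro: polys_in_vars_mult)

lemma var_pow_in_polys_in_vars:
  "v \<in> V \<Longrightarrow> (var_pow v k :: ('v, 'a::comm_ring_1) mpoly) \<in> polys_in_vars V"
  unfolding var_pow_def by (rule polys_in_vars_single) simp

lemma var_pow_mult:
  "var_pow v k * var_pow w l =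
     (Poly_Mapping.single (Poly_Mapping.single v k + Poly_Mapping.single w l) 1 :: ('v, 'a::comm_ring_1) mpoly)"
  by (simp add: var_pow_def mult_single)

lemma var_pow_power: "(var_pow v k :: ('v, 'a::comm_ring_1) mpoly) ^ n = var_pow v (n * k)"
  by (induction n) (simp_all add: var_pow_def mult_single single_add)

lemma ideal_gen_in_mult_gen: "g \<in> G \<Longrightarrow> c \<in> R \<Longrightarrow> c * g \<in> ideal_gen_in R G"
  unfolding ideal_gen_in_def by (rule CollectI, rule exI[of _ "{g}"], rule exI[of _ "\<lambda>_. c"]) auto

lemma ideal_gen_in_add:
  assumes "p \<in> ideal_gen_in (polys_in_vars V) G" "q \<in> ideal_gen_in (polys_in_vars V) G"
  shows "p + q \<in> ideal_gen_in (polys_in_vars V) G"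
proof -
  obtain F1 c1 where F1: "finite F1" "F1 \<subseteq> G" "\<forall>g\<in>F1. c1 g \<in> polys_in_vars V" "p = (\<Sum>g\<in>F1. c1 g * g)"
    using assms(1) unfolding ideal_gen_in_def by blast
  obtain F2 c2 where F2: "finite F2" "F2 \<subseteq> G" "\<forall>g\<in>F2. c2 g \<in> polys_in_vars V" "q = (\<Sum>g\<in>F2. c2 g * g)"
    using assms(2) unfolding ideal_gen_in_def by blast
  define c1' where "c1' g = (if g \<in> F1 then c1 g else 0)" for g
  define c2' where "c2' g = (if g \<in> F2 then c2 g else 0)" for g
  have "p = (\<Sum>g\<in>F1 \<union> F2. c1' g * g)"
    unfolding F1(4) c1'_def by (rule sum.mono_neutral_cong_left) (use F1 F2 in auto)
  moreover have "q = (\<Sum>g\<in>F1 \<union> F2. c2' g * g)"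
    unfolding F2(4) c2'_def by (rule sum.mono_neutral_cong_left) (use F1 F2 in auto)
  ultimately have "p + q = (\<Sum>g\<in>F1 \<union> F2. (c1' g + c2' g) * g)"
    by (simp add: distrib_right sum.distrib)
  moreover have "\<forall>g\<in>F1 \<union> F2. c1' g + c2' g \<in> polys_in_vars V"
    using F1(3) F2(3) by (auto simp: c1'_def c2'_def intro!: polys_in_vars_add)
  ultimately show ?thesis
    using F1 F2 unfolding ideal_gen_in_def mem_Collect_eq
    by (intro exI[of _ "F1 \<union> F2"] exI[of _ "\<lambda>g. c1' g + c2' g"]) auto
qed

lemma ideal_gen_in_mult:
  assumes "r \<in> polys_in_vars V" "p \<in> ideal_gen_in (polys_in_vars V) G"
  shows "r * (p :: ('v, 'a::comm_ring_1) mpoly) \<in> ideal_gen_in (polys_in_vars V) G"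
proof -
  obtain F c where F: "finite F" "F \<subseteq> G" "\<forall>g\<in>F. c g \<in> polys_in_vars V" "p = (\<Sum>g\<in>F. c g * g)"
    using assms(2) unfolding ideal_gen_in_def by blast
  have "r * p = (\<Sum>g\<in>F. (r * c g) * g)"
    using F by (simp add: sum_distrib_left mult.assoc)
  moreover have "\<forall>g\<in>F. r * c g \<in> polys_in_vars V"
    using F assms(1) by (auto intro: polys_in_vars_mult)
  ultimately show ?thesis
    using F unfolding ideal_gen_in_def mem_Collect_eq by (intro exI[of _ F] exI[of _ "\<lambda>g. r * c g"]) auto
qed

lemma ideal_gen_in_zero [simp]: "0 \<in> ideal_gen_in R G"
  unfolding ideal_gen_in_def by (rule CollectI, rule exI[of _ "{}"]) auto

lemma ideal_gen_in_sum:
  "(\<And>i. i \<in> A \<Longrightarrow> f i \<in> ideal_gen_in (polys_in_vars V) G) \<Longrightarrow>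
     (\<Sum>i\<in>A. f i) \<in> ideal_gen_in (polys_in_vars V) G"
  by (induction A rule: infinite_finite_induct) (auto intro: ideal_gen_in_add)

lemma ideal_gen_in_subset:
  assumes "G \<subseteq> polys_in_vars V"
  shows "ideal_gen_in (polys_in_vars V) G \<subseteq> polys_in_vars V"
proof
  fix p assume "p \<in> ideal_gen_in (polys_in_vars V) G"
  then obtain F c where "finite F" "F \<subseteq> G" "\<forall>g\<in>F. c g \<in> polys_in_vars V" "p = (\<Sum>g\<in>F. c g * g)"
    unfolding ideal_gen_in_def by blast
  then show "p \<in> polys_in_vars V"
    using assms by (auto intro!: polys_in_vars_sum polys_in_vars_mult)
qed

lemma map_monomials_ideal_gen_in_eq_0:
  assumes hom: "\<And>s t. \<psi> (s + t) = (\<psi> s + \<psi> t :: 'l::monoid_add)"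
    and "\<And>g. g \<in> G \<Longrightarrow> map_monomials \<psi> g = 0"
    and "p \<in> ideal_gen_in R G"
  shows "map_monomials \<psi> (p :: ('k::comm_monoid_add) \<Rightarrow>\<^sub>0 ('b::comm_ring_1)) = 0"
proof -
  obtain F c where F: "finite F" "F \<subseteq> G" "p = (\<Sum>g\<in>F. c g * g)"
    using assms(3) unfolding ideal_gen_in_def by blast
  have "map_monomials \<psi> p = (\<Sum>g\<in>F. map_monomials \<psi> (c g) * map_monomials \<psi> g)"
    by (simp only: F(3) map_monomials_sum map_monomials_mult[OF hom])
  also have "\<dots> = 0"
    using F assms(2) by (intro sum.neutral) auto
  finally show ?thesis .
qed

lemma minors2_subset_polys_in_vars:
  "minors2 m d \<subseteq> (polys_in_vars (xy_vars m) :: (nat + nat, 'a::comm_ring_1) mpoly set)"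
proof
  fix g :: "(nat + nat, 'a) mpoly" assume "g \<in> minors2 m d"
  then obtain i j where ij: "1 \<le> i" "i < j" "j \<le> m"
    and g: "g = var_pow (Inl i) (d i) * var_pow (Inr j) (d j) - var_pow (Inl j) (d j) * var_pow (Inr i) (d i)"
    unfolding minors2_def by blast
  have "Inl i \<in> xy_vars m" "Inr i \<in> xy_vars m" "Inl j \<in> xy_vars m" "Inr j \<in> xy_vars m"
    using ij unfolding xy_vars_def by auto
  then show "g \<in> polys_in_vars (xy_vars m)"
    unfolding g by (intro polys_in_vars_diff polys_in_vars_mult var_pow_in_polys_in_vars)
qed

section \<open>The toric monomial map\<close>

definition cofactor :: "nat \<Rightarrow> (nat \<Rightarrow> nat) \<Rightarrow> nat \<Rightarrow> nat" where
  "cofactor m d i = (\<Prod>k\<in>{1..m}-{i}. d k)"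

lemma cofactor_mult_self: "i \<in> {1..m} \<Longrightarrow> cofactor m d i * d i = (\<Prod>k\<in>{1..m}. d k)"
  unfolding cofactor_def by (simp add: prod.remove mult.commute)

text \<open>Exponent map of the monomial map x_i \<mapsto> s^{e_i} z_i, y_i \<mapsto> t^{e_i} z_i, e_i = cofactor m d i,
  with the variables s, t, z_i encoded as 0, 1, Suc i.\<close>

definition toric_exp :: "nat \<Rightarrow> (nat \<Rightarrow> nat) \<Rightarrow> (nat + nat \<Rightarrow>\<^sub>0 nat) \<Rightarrow> (nat \<Rightarrow>\<^sub>0 nat)" where
  "toric_exp m d t =
     Poly_Mapping.single 0 (\<Sum>i\<in>{1..m}. cofactor m d i * Poly_Mapping.lookup t (Inl i))
   + Poly_Mapping.single 1 (\<Sum>i\<in>{1..m}. cofactor m d i * Poly_Mapping.lookup t (Inr i))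
   + (\<Sum>i\<in>{1..m}. Poly_Mapping.single (Suc i) (Poly_Mapping.lookup t (Inl i) + Poly_Mapping.lookup t (Inr i)))"

lemma toric_exp_add: "toric_exp m d (s + t) = toric_exp m d s + toric_exp m d t"
  by (simp add: toric_exp_def lookup_add algebra_simps sum.distrib single_add)

lemma toric_exp_zero [simp]: "toric_exp m d 0 = 0"
  by (simp add: toric_exp_def)

lemma toric_exp_single_Inl:
  "i \<in> {1..m} \<Longrightarrow> toric_exp m d (Poly_Mapping.single (Inl i) a) =
     Poly_Mapping.single 0 (cofactor m d i * a) + Poly_Mapping.single (Suc i) a"
  by (simp add: toric_exp_def lookup_single when_def if_distrib if_distribR sum.delta cong: if_cong)

lemma toric_exp_single_Inr:
  "i \<in> {1..m} \<Longrightarrow> toric_exp m d (Poly_Mapping.single (Inr i) a) =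
     Poly_Mapping.single 1 (cofactor m d i * a) + Poly_Mapping.single (Suc i) a"
  by (simp add: toric_exp_def lookup_single when_def if_distrib if_distribR sum.delta cong: if_cong)

lemma lookup_toric_exp_0:
  "Poly_Mapping.lookup (toric_exp m d t) 0 = (\<Sum>i\<in>{1..m}. cofactor m d i * Poly_Mapping.lookup t (Inl i))"
  by (simp add: toric_exp_def lookup_add lookup_sum lookup_single)

lemma lookup_toric_exp_Suc:
  "k \<in> {1..m} \<Longrightarrow>
     Poly_Mapping.lookup (toric_exp m d t) (Suc k) = Poly_Mapping.lookup t (Inl k) + Poly_Mapping.lookup t (Inr k)"
  by (simp add: toric_exp_def lookup_add lookup_sum lookup_single when_def sum.delta)

lemma map_monomials_toric_exp_minors2:
  assumes "g \<in> minors2 m d"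
  shows "map_monomials (toric_exp m d) (g :: (nat + nat, 'a::comm_ring_1) mpoly) = 0"
proof -
  obtain i j where "1 \<le> i" "i < j" "j \<le> m"
    and g: "g = var_pow (Inl i) (d i) * var_pow (Inr j) (d j) - var_pow (Inl j) (d j) * var_pow (Inr i) (d i)"
    using assms unfolding minors2_def by blast
  then have i: "i \<in> {1..m}" and j: "j \<in> {1..m}" by auto
  have "toric_exp m d (Poly_Mapping.single (Inl i) (d i) + Poly_Mapping.single (Inr j) (d j))
      = toric_exp m d (Poly_Mapping.single (Inl j) (d j) + Poly_Mapping.single (Inr i) (d i))"
    by (simp add: toric_exp_add toric_exp_single_Inl[OF i] toric_exp_single_Inl[OF j]
        toric_exp_single_Inr[OF i] toric_exp_single_Inr[OF j] cofactor_mult_self[OF i]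
        cofactor_mult_self[OF j] add_ac)
  then show ?thesis
    by (simp add: g var_pow_mult map_monomials_diff)
qed

section \<open>Reduction modulo the minors\<close>

definition reduced_monomial :: "nat \<Rightarrow> (nat \<Rightarrow> nat) \<Rightarrow> (nat + nat \<Rightarrow>\<^sub>0 nat) \<Rightarrow> bool" where
  "reduced_monomial m d t \<longleftrightarrow> \<not> (\<exists>i j. 1 \<le> i \<and> i < j \<and> j \<le> m \<and>
     d i \<le> Poly_Mapping.lookup t (Inl i) \<and> d j \<le> Poly_Mapping.lookup t (Inr j))"

definition reduced_poly :: "nat \<Rightarrow> (nat \<Rightarrow> nat) \<Rightarrow> (nat + nat, 'a::comm_ring_1) mpoly \<Rightarrow> bool" where
  "reduced_poly m d p \<longleftrightarrow>
     p \<in> polys_in_vars (xy_vars m) \<and> (\<forall>t\<in>Poly_Mapping.keys p. reduced_monomial m d t)"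

lemma reduced_poly_sum: "(\<And>i. i \<in> A \<Longrightarrow> reduced_poly m d (f i)) \<Longrightarrow> reduced_poly m d (\<Sum>i\<in>A. f i)"
  unfolding reduced_poly_def using keys_sum[of f A] by (auto intro!: polys_in_vars_sum)

lemma reduced_poly_const_mult:
  assumes "reduced_poly m d p"
  shows "reduced_poly m d (Poly_Mapping.single 0 c * p)"
proof -
  have "Poly_Mapping.keys (Poly_Mapping.single 0 c * p) \<subseteq> Poly_Mapping.keys p"
    using keys_mult[of "Poly_Mapping.single 0 c" p] by (auto split: if_splits)
  then show ?thesis
    using assms unfolding reduced_poly_def by (auto intro: polys_in_vars_mult polys_in_vars_const)
qed

text \<open>The exchange x_i^{d_i} y_j^{d_j} \<rightarrow> x_j^{d_j} y_i^{d_i} (i < j) lowers this weight by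
  (j - i) \<Prod>_k d_k, so it serves as termination measure for reduction modulo the minors.\<close>

definition x_weight :: "nat \<Rightarrow> (nat \<Rightarrow> nat) \<Rightarrow> (nat + nat \<Rightarrow>\<^sub>0 nat) \<Rightarrow> nat" where
  "x_weight m d t = (\<Sum>k\<in>{1..m}. (m + 1 - k) * cofactor m d k * Poly_Mapping.lookup t (Inl k))"

lemma x_weight_add: "x_weight m d (s + t) = x_weight m d s + x_weight m d t"
  by (simp add: x_weight_def lookup_add distrib_left sum.distrib)

lemma x_weight_single_Inl:
  "i \<in> {1..m} \<Longrightarrow> x_weight m d (Poly_Mapping.single (Inl i) a) = (m + 1 - i) * cofactor m d i * a"
  by (simp add: x_weight_def lookup_single when_def if_distrib sum.delta cong: if_cong)

lemma x_weight_single_Inr: "x_weight m d (Poly_Mapping.single (Inr i) a) = 0"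
  by (simp add: x_weight_def lookup_single)

locale positive_exponents =
  fixes m :: nat and d :: "nat \<Rightarrow> nat"
  assumes d_pos: "\<And>i. 1 \<le> i \<Longrightarrow> i \<le> m \<Longrightarrow> d i > 0"
begin

lemma cofactor_pos: "cofactor m d k > 0"
  unfolding cofactor_def using d_pos by (auto intro!: prod_pos)

lemma x_weight_exchange:
  assumes "1 \<le> i" "i < j" "j \<le> m"
  shows "x_weight m d (Poly_Mapping.single (Inl j) (d j) + Poly_Mapping.single (Inr i) (d i) + r)
       < x_weight m d (Poly_Mapping.single (Inl i) (d i) + Poly_Mapping.single (Inr j) (d j) + r)"
proof -
  have i: "i \<in> {1..m}" and j: "j \<in> {1..m}"
    using assms by auto
  have "(\<Prod>k\<in>{1..m}. d k) > 0"
    using d_pos by (auto intro!: prod_pos)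
  then show ?thesis
    using assms by (simp add: x_weight_add x_weight_single_Inl[OF i] x_weight_single_Inl[OF j]
        x_weight_single_Inr mult.assoc cofactor_mult_self[OF i] cofactor_mult_self[OF j])
qed

lemma exchange_minors2:
  assumes ij: "1 \<le> i" "i < j" "j \<le> m"
  defines "a \<equiv> Poly_Mapping.single (Inl i) (d i) + Poly_Mapping.single (Inr j) (d j)"
    and "b \<equiv> Poly_Mapping.single (Inl j) (d j) + Poly_Mapping.single (Inr i) (d i)"
  assumes keys: "Poly_Mapping.keys (a + r) \<subseteq> xy_vars m"
  shows "Poly_Mapping.keys (b + r) \<subseteq> xy_vars m"
    and "x_weight m d (b + r) < x_weight m d (a + r)"
    and "(Poly_Mapping.single (a + r) 1 - Poly_Mapping.single (b + r) 1 :: (nat + nat, 'a::comm_ring_1) mpoly)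
           \<in> ideal_gen_in (polys_in_vars (xy_vars m)) (minors2 m d)"
proof -
  have r: "Poly_Mapping.keys r \<subseteq> xy_vars m"
    using keys keys_add[of a r] unfolding a_def by (auto simp: in_keys_iff lookup_add)
  have "Inl j \<in> xy_vars m" "Inr i \<in> xy_vars m"
    using ij unfolding xy_vars_def by auto
  then have "Poly_Mapping.keys b \<subseteq> xy_vars m"
    using keys_add[of "Poly_Mapping.single (Inl j) (d j)" "Poly_Mapping.single (Inr i) (d i)"]
    unfolding b_def by (auto split: if_splits)
  then show "Poly_Mapping.keys (b + r) \<subseteq> xy_vars m"
    using r keys_add[of b r] by blast
  show "x_weight m d (b + r) < x_weight m d (a + r)"
    unfolding a_def b_def by (rule x_weight_exchange[OF ij])
  define g :: "(nat + nat, 'a) mpoly" where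
    "g = var_pow (Inl i) (d i) * var_pow (Inr j) (d j) - var_pow (Inl j) (d j) * var_pow (Inr i) (d i)"
  have "g \<in> minors2 m d"
    unfolding g_def minors2_def using ij by blast
  then have "Poly_Mapping.single r 1 * g \<in> ideal_gen_in (polys_in_vars (xy_vars m)) (minors2 m d)"
    by (rule ideal_gen_in_mult_gen[OF _ polys_in_vars_single[OF r]])
  moreover have "Poly_Mapping.single r 1 * g = Poly_Mapping.single (a + r) 1 - Poly_Mapping.single (b + r) 1"
    unfolding g_def var_pow_mult right_diff_distrib mult_single by (simp add: a_def b_def add_ac)
  ultimately show "(Poly_Mapping.single (a + r) 1 - Poly_Mapping.single (b + r) 1 :: (nat + nat, 'a) mpoly)
      \<in> ideal_gen_in (polys_in_vars (xy_vars m)) (minors2 m d)"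
    by simp
qed

lemma monomial_reduces:
  assumes "Poly_Mapping.keys t \<subseteq> xy_vars m"
  shows "\<exists>s. reduced_poly m d s \<and> (Poly_Mapping.single t 1 - s :: (nat + nat, 'a::comm_ring_1) mpoly)
           \<in> ideal_gen_in (polys_in_vars (xy_vars m)) (minors2 m d)"
  using assms
proof (induction "x_weight m d t" arbitrary: t rule: less_induct)
  case less
  show ?case
  proof (cases "reduced_monomial m d t")
    case True
    then show ?thesis
      using less.prems by (intro exI[of _ "Poly_Mapping.single t 1"]) (auto simp: reduced_poly_def polys_in_vars_single)
  next
    case False
    then obtain i j where ij: "1 \<le> i" "i < j" "j \<le> m"
      and ge: "d i \<le> Poly_Mapping.lookup t (Inl i)" "d j \<le> Poly_Mapping.lookup t (Inr j)"
      unfolding reduced_monomial_def by blast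
    define a where "a = Poly_Mapping.single (Inl i) (d i) + Poly_Mapping.single (Inr j) (d j)"
    have t: "t = a + (t - a)"
      by (rule poly_mapping_eqI) (use ge in \<open>auto simp: a_def lookup_add lookup_minus lookup_single when_def\<close>)
    then obtain t' where t': "Poly_Mapping.keys t' \<subseteq> xy_vars m" "x_weight m d t' < x_weight m d t"
      "(Poly_Mapping.single t 1 - Poly_Mapping.single t' 1 :: (nat + nat, 'a) mpoly)
         \<in> ideal_gen_in (polys_in_vars (xy_vars m)) (minors2 m d)"
      using exchange_minors2[OF ij, of "t - a"] less.prems unfolding a_def by metis
    obtain s :: "(nat + nat, 'a) mpoly" where "reduced_poly m d s"
      and s: "Poly_Mapping.single t' 1 - s \<in> ideal_gen_in (polys_in_vars (xy_vars m)) (minors2 m d)"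
      using less.hyps[OF t'(2,1)] by blast
    moreover have "Poly_Mapping.single t 1 - s
        = (Poly_Mapping.single t 1 - Poly_Mapping.single t' 1) + (Poly_Mapping.single t' 1 - s)"
      by simp
    ultimately show ?thesis
      using ideal_gen_in_add[OF t'(3) s] by auto
  qed
qed

lemma poly_reduces:
  assumes p: "(p :: (nat + nat, 'a::comm_ring_1) mpoly) \<in> polys_in_vars (xy_vars m)"
  shows "\<exists>s. reduced_poly m d s \<and> p - s \<in> ideal_gen_in (polys_in_vars (xy_vars m)) (minors2 m d)"
proof -
  have "\<exists>s. reduced_poly m d s \<and> (Poly_Mapping.single t 1 - s :: (nat + nat, 'a) mpoly)
           \<in> ideal_gen_in (polys_in_vars (xy_vars m)) (minors2 m d)"
    if "t \<in> Poly_Mapping.keys p" for t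
    using monomial_reduces p that unfolding polys_in_vars_def by blast
  then obtain S :: "(nat + nat \<Rightarrow>\<^sub>0 nat) \<Rightarrow> (nat + nat, 'a) mpoly" where S: "\<And>t. t \<in> Poly_Mapping.keys p \<Longrightarrow> reduced_poly m d (S t) \<and>
      Poly_Mapping.single t 1 - S t \<in> ideal_gen_in (polys_in_vars (xy_vars m)) (minors2 m d)"
    by metis
  define s where "s = (\<Sum>t\<in>Poly_Mapping.keys p. Poly_Mapping.single 0 (Poly_Mapping.lookup p t) * S t)"
  have "reduced_poly m d s"
    unfolding s_def using S by (intro reduced_poly_sum reduced_poly_const_mult) auto
  moreover have "p - s = (\<Sum>t\<in>Poly_Mapping.keys p.
      Poly_Mapping.single 0 (Poly_Mapping.lookup p t) * (Poly_Mapping.single t 1 - S t))"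
    by (subst (1) poly_mapping_sum_single_lookup) (simp add: s_def right_diff_distrib mult_single sum_subtractf)
  moreover have "\<dots> \<in> ideal_gen_in (polys_in_vars (xy_vars m)) (minors2 m d)"
    using S by (intro ideal_gen_in_sum ideal_gen_in_mult polys_in_vars_const) auto
  ultimately show ?thesis
    by metis
qed

end

section \<open>Primality for pairwise coprime exponents\<close>

lemma weighted_sum_eq_ex_less:
  fixes w a b :: "'i \<Rightarrow> nat"
  assumes "finite A" "\<And>i. i \<in> A \<Longrightarrow> 0 < w i"
    and "(\<Sum>i\<in>A. w i * a i) = (\<Sum>i\<in>A. w i * b i)" "k \<in> A" "a k \<noteq> b k"
  shows "\<exists>p\<in>A. a p < b p"
proof (rule ccontr)
  assume "\<not> ?thesis"
  then have "\<forall>p\<in>A. w p * b p \<le> w p * a p" and "w k * b k < w k * a k"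
    using assms(2,4,5) by auto
  then have "(\<Sum>i\<in>A. w i * b i) < (\<Sum>i\<in>A. w i * a i)"
    using assms(1,4) by (intro sum_strict_mono_ex1) auto
  then show False
    using assms(3) by simp
qed

locale coprime_exponents = positive_exponents +
  assumes coprime_d: "\<And>i j. 1 \<le> i \<Longrightarrow> i < j \<Longrightarrow> j \<le> m \<Longrightarrow> gcd (d i) (d j) = 1"
begin

lemma coprime_cofactor: "k \<in> {1..m} \<Longrightarrow> coprime (d k) (cofactor m d k)"
  unfolding cofactor_def
proof (rule coprime_commute[THEN iffD1], rule prod_coprime_left)
  fix i assume k: "k \<in> {1..m}" and i: "i \<in> {1..m} - {k}"
  then have "i < k \<or> k < i"
    by auto
  then show "coprime (d i) (d k)"
    using coprime_d[of i k] coprime_d[of k i] i k by (auto simp: coprime_iff_gcd_eq_1 gcd.commute)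
qed

lemma cofactor_weighted_sum_mod:
  assumes k: "k \<in> {1..m}"
  shows "(\<Sum>i\<in>{1..m}. cofactor m d i * f i) mod d k = (cofactor m d k * f k) mod d k"
proof -
  have "d k dvd (\<Sum>i\<in>{1..m}-{k}. cofactor m d i * f i)"
    using k by (intro dvd_sum dvd_mult2) (auto simp: cofactor_def intro!: dvd_prodI)
  then obtain q where "(\<Sum>i\<in>{1..m}-{k}. cofactor m d i * f i) = d k * q" ..
  then show ?thesis
    using k by (simp add: sum.remove)
qed

text \<open>Monomials with equal image have x_k-exponents congruent modulo d_k: every cofactor but e_k is
  divisible by d_k, and e_k is prime to d_k.\<close>

lemma toric_exp_eq_Inl_less_imp_ge:
  assumes eq: "toric_exp m d s = toric_exp m d t" and k: "k \<in> {1..m}"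
    and less: "Poly_Mapping.lookup t (Inl k) < Poly_Mapping.lookup s (Inl k)"
  shows "d k \<le> Poly_Mapping.lookup s (Inl k)" "d k \<le> Poly_Mapping.lookup t (Inr k)"
proof -
  let ?a = "Poly_Mapping.lookup s (Inl k)" and ?a' = "Poly_Mapping.lookup t (Inl k)"
  have "(\<Sum>i\<in>{1..m}. cofactor m d i * Poly_Mapping.lookup s (Inl i))
      = (\<Sum>i\<in>{1..m}. cofactor m d i * Poly_Mapping.lookup t (Inl i))"
    using arg_cong[OF eq, of "\<lambda>x. Poly_Mapping.lookup x 0"] by (simp add: lookup_toric_exp_0)
  then have "(cofactor m d k * ?a) mod d k = (cofactor m d k * ?a') mod d k"
    using cofactor_weighted_sum_mod[OF k, of "\<lambda>i. Poly_Mapping.lookup s (Inl i)"]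
      cofactor_weighted_sum_mod[OF k, of "\<lambda>i. Poly_Mapping.lookup t (Inl i)"] by simp
  then have "d k dvd cofactor m d k * (?a - ?a')"
    using less by (simp add: mod_eq_dvd_iff_nat diff_mult_distrib2)
  then have "d k dvd ?a - ?a'"
    using coprime_dvd_mult_right_iff[OF coprime_cofactor[OF k]] by simp
  then have "d k \<le> ?a - ?a'"
    using less by (intro dvd_imp_le) auto
  moreover have "?a + Poly_Mapping.lookup s (Inr k) = ?a' + Poly_Mapping.lookup t (Inr k)"
    using arg_cong[OF eq, of "\<lambda>x. Poly_Mapping.lookup x (Suc k)"] k by (simp add: lookup_toric_exp_Suc)
  ultimately show "d k \<le> ?a" "d k \<le> Poly_Mapping.lookup t (Inr k)"
    by auto
qed

text \<open>Otherwise the weighted x-degrees force t < s at some x_p and s < t at some x_n, and the previous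
  lemma puts x_p^{d_p} y_n^{d_n} into s (if p < n) or x_n^{d_n} y_p^{d_p} into t (if n < p).\<close>

lemma toric_exp_eq_reduced_Inl_eq:
  assumes s: "reduced_monomial m d s" and t: "reduced_monomial m d t"
    and eq: "toric_exp m d s = toric_exp m d t" and k: "k \<in> {1..m}"
  shows "Poly_Mapping.lookup s (Inl k) = Poly_Mapping.lookup t (Inl k)"
proof (rule ccontr)
  let ?a = "\<lambda>k. Poly_Mapping.lookup s (Inl k)" and ?a' = "\<lambda>k. Poly_Mapping.lookup t (Inl k)"
  assume ne: "?a k \<noteq> ?a' k"
  have sums: "(\<Sum>i\<in>{1..m}. cofactor m d i * ?a i) = (\<Sum>i\<in>{1..m}. cofactor m d i * ?a' i)"
    using arg_cong[OF eq, of "\<lambda>x. Poly_Mapping.lookup x 0"] by (simp add: lookup_toric_exp_0)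
  obtain p where p: "p \<in> {1..m}" "?a' p < ?a p"
    using weighted_sum_eq_ex_less[OF _ _ sums[symmetric] k] ne cofactor_pos by auto
  obtain n where n: "n \<in> {1..m}" "?a n < ?a' n"
    using weighted_sum_eq_ex_less[OF _ _ sums k] ne cofactor_pos by auto
  have ge: "d p \<le> ?a p" "d p \<le> Poly_Mapping.lookup t (Inr p)"
    "d n \<le> ?a' n" "d n \<le> Poly_Mapping.lookup s (Inr n)"
    using toric_exp_eq_Inl_less_imp_ge[OF eq p] toric_exp_eq_Inl_less_imp_ge[OF eq[symmetric] n] by auto
  have "p \<noteq> n"
    using p(2) n(2) by auto
  then consider "p < n" | "n < p"
    by linarith
  then show False
  proof cases
    case 1
    then show False using s ge p(1) n(1) unfolding reduced_monomial_def by auto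
  next
    case 2
    then show False using t ge p(1) n(1) unfolding reduced_monomial_def by auto
  qed
qed

lemma inj_on_toric_exp_reduced:
  "inj_on (toric_exp m d) {t. Poly_Mapping.keys t \<subseteq> xy_vars m \<and> reduced_monomial m d t}"
proof (rule inj_onI, clarsimp)
  fix s t
  assume s: "Poly_Mapping.keys s \<subseteq> xy_vars m" "reduced_monomial m d s"
    and t: "Poly_Mapping.keys t \<subseteq> xy_vars m" "reduced_monomial m d t"
    and eq: "toric_exp m d s = toric_exp m d t"
  show "s = t"
  proof (rule poly_mapping_eqI)
    fix x
    show "Poly_Mapping.lookup s x = Poly_Mapping.lookup t x"
    proof (cases "x \<in> xy_vars m")
      case True
      then obtain k where k: "k \<in> {1..m}" "x = Inl k \<or> x = Inr k"
        unfolding xy_vars_def by auto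
      have "Poly_Mapping.lookup s (Inl k) + Poly_Mapping.lookup s (Inr k)
          = Poly_Mapping.lookup t (Inl k) + Poly_Mapping.lookup t (Inr k)"
        using arg_cong[OF eq, of "\<lambda>x. Poly_Mapping.lookup x (Suc k)"] k(1) by (simp add: lookup_toric_exp_Suc)
      then show ?thesis
        using toric_exp_eq_reduced_Inl_eq[OF s(2) t(2) eq k(1)] k(2) by auto
    next
      case False
      then have "x \<notin> Poly_Mapping.keys s" "x \<notin> Poly_Mapping.keys t"
        using s(1) t(1) by blast+
      then show ?thesis
        by (simp add: in_keys_iff)
    qed
  qed
qed

lemma prime_ideal_minors2:
  "prime_ideal_in (polys_in_vars (xy_vars m) :: (nat + nat, 'a::field) mpoly set)
     (ideal_gen_in (polys_in_vars (xy_vars m)) (minors2 m d))"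
proof -
  let ?R = "polys_in_vars (xy_vars m) :: (nat + nat, 'a) mpoly set"
  let ?I = "ideal_gen_in ?R (minors2 m d)"
  let ?\<phi> = "map_monomials (toric_exp m d)"
  have kill: "?\<phi> p = 0" if "p \<in> ?I" for p
    using map_monomials_ideal_gen_in_eq_0[OF toric_exp_add[of m d] map_monomials_toric_exp_minors2 that] .
  have kernel: "p \<in> ?I" if p: "p \<in> ?R" "?\<phi> p = 0" for p
  proof -
    obtain s where s: "reduced_poly m d s" "p - s \<in> ?I"
      using poly_reduces[OF p(1)] by blast
    then have \<phi>s: "?\<phi> s = 0"
      using kill[OF s(2)] p(2) by (simp add: map_monomials_diff)
    have keys: "Poly_Mapping.keys s \<subseteq> {t. Poly_Mapping.keys t \<subseteq> xy_vars m \<and> reduced_monomial m d t}"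
      using s(1) unfolding reduced_poly_def polys_in_vars_def by blast
    have "s = 0"
      by (rule map_monomials_eq_0_inj_on_keys[OF inj_on_subset[OF inj_on_toric_exp_reduced keys] \<phi>s])
    then show ?thesis
      using s(2) by simp
  qed
  have "?I \<subseteq> ?R"
    by (rule ideal_gen_in_subset[OF minors2_subset_polys_in_vars])
  moreover have "?\<phi> (1 :: (nat + nat, 'a) mpoly) = 1"
    using map_monomials_single[of "toric_exp m d" 0 "1::'a"] by simp
  then have "1 \<notin> ?I"
    using kill[of 1] by auto
  moreover have "a \<in> ?I \<or> b \<in> ?I" if "a \<in> ?R" "b \<in> ?R" "a * b \<in> ?I" for a b
  proof -
    have "?\<phi> a * ?\<phi> b = 0"
      using kill[OF that(3)] by (simp add: map_monomials_mult[OF toric_exp_add[of m d]])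
    then show ?thesis \<comment> \<open>the target ring \<open>(nat \<Rightarrow>\<^sub>0 nat) \<Rightarrow>\<^sub>0 'a\<close> is an integral domain\<close>
      using kernel that(1,2) by auto
  qed
  ultimately show ?thesis
    unfolding prime_ideal_in_def by blast
qed

end

section \<open>Non-primality for exponents with a common factor\<close>

definition mon_xy :: "nat \<Rightarrow> nat \<Rightarrow> nat \<Rightarrow> nat \<Rightarrow> (nat + nat, 'a::comm_ring_1) mpoly" where
  "mon_xy i a j b = var_pow (Inl i) a * var_pow (Inr j) b"

lemma mon_xy_eq_single:
  "mon_xy i a j b = Poly_Mapping.single (Poly_Mapping.single (Inl i) a + Poly_Mapping.single (Inr j) b) 1"
  by (simp add: mon_xy_def var_pow_mult)

lemma mon_xy_power: "mon_xy i a j b ^ k = mon_xy i (k * a) j (k * b)"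
  by (simp add: mon_xy_def power_mult_distrib var_pow_power)

lemma mon_xy_in_polys_in_vars:
  "i \<in> {1..m} \<Longrightarrow> j \<in> {1..m} \<Longrightarrow> mon_xy i a j b \<in> polys_in_vars (xy_vars m)"
  unfolding mon_xy_def by (intro polys_in_vars_mult var_pow_in_polys_in_vars) (auto simp: xy_vars_def)

lemma mon_xy_neq:
  assumes "i \<noteq> j" "a \<noteq> 0"
  shows "(mon_xy i a j b :: (nat + nat, 'a::comm_ring_1) mpoly) \<noteq> mon_xy j c i e"
proof
  let ?t = "Poly_Mapping.single (Inl i) a + Poly_Mapping.single (Inr j) b"
  assume "(mon_xy i a j b :: (nat + nat, 'a) mpoly) = mon_xy j c i e"
  then have "Poly_Mapping.lookup (mon_xy i a j b :: (nat + nat, 'a) mpoly) ?t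
      = Poly_Mapping.lookup (mon_xy j c i e) ?t"
    by simp
  then have "?t = Poly_Mapping.single (Inl j) c + Poly_Mapping.single (Inr i) e"
    by (simp add: mon_xy_eq_single lookup_single when_def split: if_splits)
  then have "Poly_Mapping.lookup ?t (Inl i)
      = Poly_Mapping.lookup (Poly_Mapping.single (Inl j) c + Poly_Mapping.single (Inr i) e) (Inl i)"
    by simp
  then show False
    using assms by (simp add: lookup_add lookup_single)
qed

lemma keys_ideal_minors2_Inl_ge:
  assumes "(p :: (nat + nat, 'a::comm_ring_1) mpoly) \<in> ideal_gen_in R (minors2 m d)"
    and "t \<in> Poly_Mapping.keys p"
  shows "\<exists>k\<in>{1..m}. d k \<le> Poly_Mapping.lookup t (Inl k)"
proof -
  obtain F c where F: "finite F" "F \<subseteq> minors2 m d" "p = (\<Sum>g\<in>F. c g * g)"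
    using assms(1) unfolding ideal_gen_in_def by blast
  obtain g where g: "g \<in> F" "t \<in> Poly_Mapping.keys (c g * g)"
    using keys_sum[of "\<lambda>g. c g * g" F] assms(2) F(3) by blast
  obtain u v where uv: "t = u + v" "v \<in> Poly_Mapping.keys g"
    using keys_mult[of "c g" g] g(2) by blast
  obtain i j where ij: "1 \<le> i" "i < j" "j \<le> m"
    and "g = var_pow (Inl i) (d i) * var_pow (Inr j) (d j) - var_pow (Inl j) (d j) * var_pow (Inr i) (d i)"
    using F(2) g(1) unfolding minors2_def by blast
  then have "v = Poly_Mapping.single (Inl i) (d i) + Poly_Mapping.single (Inr j) (d j) \<or>
      v = Poly_Mapping.single (Inl j) (d j) + Poly_Mapping.single (Inr i) (d i)"
    using uv(2) keys_diff by (fastforce simp: var_pow_mult split: if_splits)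
  then have "d i \<le> Poly_Mapping.lookup v (Inl i) \<or> d j \<le> Poly_Mapping.lookup v (Inl j)"
    by (auto simp: lookup_add lookup_single)
  then have "\<exists>k\<in>{1..m}. d k \<le> Poly_Mapping.lookup v (Inl k)"
    using ij by force
  then show ?thesis
    unfolding uv(1) lookup_add by (auto intro: trans_le_add2)
qed

lemma ideal_minors2_eq_0_if_Inl_less:
  assumes "(p :: (nat + nat, 'a::comm_ring_1) mpoly) \<in> ideal_gen_in R (minors2 m d)"
    and "\<And>t k. t \<in> Poly_Mapping.keys p \<Longrightarrow> k \<in> {1..m} \<Longrightarrow> Poly_Mapping.lookup t (Inl k) < d k"
  shows "p = 0"
  using keys_ideal_minors2_Inl_ge[OF assms(1)] assms(2) by (metis all_not_in_conv keys_eq_empty not_le)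

context positive_exponents
begin

lemma keys_mon_xy_power_mult_Inl_less:
  assumes "i \<in> {1..m}" "j \<in> {1..m}" "i \<noteq> j" "d i = g * a" "d j = g * b" "k + l < g" "r \<in> {1..m}"
    and "t \<in> Poly_Mapping.keys (mon_xy i a j b ^ k * mon_xy j b i a ^ l :: (nat + nat, 'a::comm_ring_1) mpoly)"
  shows "Poly_Mapping.lookup t (Inl r) < d r"
proof -
  have "t = Poly_Mapping.single (Inl i) (k * a) + Poly_Mapping.single (Inr j) (k * b)
      + (Poly_Mapping.single (Inl j) (l * b) + Poly_Mapping.single (Inr i) (l * a))"
    using assms(8) unfolding mon_xy_power unfolding mon_xy_eq_single by (simp add: mult_single split: if_splits)
  moreover have "k * a < d i" "l * b < d j"
    using assms(1,2,4-6) d_pos[of i] d_pos[of j] by auto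
  ultimately show ?thesis
    using assms(3,7) d_pos by (auto simp: lookup_add lookup_single when_def)
qed

lemma not_prime_ideal_minors2:
  assumes ij: "1 \<le> i" "i < j" "j \<le> m" and "gcd (d i) (d j) \<noteq> 1"
  shows "\<not> prime_ideal_in (polys_in_vars (xy_vars m) :: (nat + nat, 'a::comm_ring_1) mpoly set)
            (ideal_gen_in (polys_in_vars (xy_vars m)) (minors2 m d))"
proof
  let ?R = "polys_in_vars (xy_vars m) :: (nat + nat, 'a) mpoly set"
  let ?I = "ideal_gen_in ?R (minors2 m d)"
  assume prime: "prime_ideal_in ?R ?I"
  define g where "g = gcd (d i) (d j)"
  have "d i > 0" "d j > 0"
    using d_pos ij by auto
  then have "g > 1"
    using assms(4) unfolding g_def by (metis gcd_pos_nat less_one nat_neq_iff)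
  then obtain n where g_Suc: "g = Suc n"
    using not0_implies_Suc by fastforce
  obtain a b where ab: "d i = g * a" "d j = g * b"
    unfolding g_def by (meson gcd_dvd1 gcd_dvd2 dvdE)
  define U :: "(nat + nat, 'a) mpoly" where "U = mon_xy i a j b"
  define W :: "(nat + nat, 'a) mpoly" where "W = mon_xy j b i a"
  define B where "B = (\<Sum>k<g. U ^ k * W ^ (n - k))"
  have "i \<in> {1..m}" "j \<in> {1..m}" "i \<noteq> j"
    using ij by auto
  note small = keys_mon_xy_power_mult_Inl_less[OF this ab]
  have factor: "U ^ g - W ^ g = (U - W) * B"
    unfolding B_def g_Suc by (rule diff_power_eq_sum)
  have "U ^ g - W ^ g
      = var_pow (Inl i) (d i) * var_pow (Inr j) (d j) - var_pow (Inl j) (d j) * var_pow (Inr i) (d i)"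
    unfolding U_def W_def mon_xy_power by (simp add: mon_xy_def ab)
  then have "U ^ g - W ^ g \<in> minors2 m d"
    using ij unfolding minors2_def by blast
  then have "(U - W) * B \<in> ?I"
    using ideal_gen_in_mult_gen[OF _ polys_in_vars_one] factor by fastforce
  moreover have "U \<in> ?R" "W \<in> ?R"
    using ij unfolding U_def W_def by (simp_all add: mon_xy_in_polys_in_vars)
  then have "U - W \<in> ?R" "B \<in> ?R"
    unfolding B_def by (auto intro!: polys_in_vars_diff polys_in_vars_sum polys_in_vars_mult polys_in_vars_power)
  ultimately have "U - W \<in> ?I \<or> B \<in> ?I"
    using prime unfolding prime_ideal_in_def by blast
  moreover have "U - W = 0" if "U - W \<in> ?I"
  proof (rule ideal_minors2_eq_0_if_Inl_less[OF that])
    fix t r assume t: "t \<in> Poly_Mapping.keys (U - W)" and r: "r \<in> {1..m}"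
    then have "t \<in> Poly_Mapping.keys (U ^ 1 * W ^ 0) \<or> t \<in> Poly_Mapping.keys (U ^ 0 * W ^ 1)"
      using keys_diff[of U W] by auto
    then show "Poly_Mapping.lookup t (Inl r) < d r"
      using small[of 1 0 r t] small[of 0 1 r t] \<open>g > 1\<close> r by (auto simp: U_def W_def)
  qed
  moreover have "B = 0" if "B \<in> ?I"
  proof (rule ideal_minors2_eq_0_if_Inl_less[OF that])
    fix t r assume t: "t \<in> Poly_Mapping.keys B" and r: "r \<in> {1..m}"
    then obtain k where "k < g" "t \<in> Poly_Mapping.keys (U ^ k * W ^ (n - k))"
      using keys_sum[of "\<lambda>k. U ^ k * W ^ (n - k)" "{..<g}"] unfolding B_def by blast
    then show "Poly_Mapping.lookup t (Inl r) < d r"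
      using small[of k "n - k" r t] g_Suc r by (auto simp: U_def W_def)
  qed
  moreover have "U ^ g \<noteq> W ^ g"
    using ij \<open>d i > 0\<close> unfolding U_def W_def mon_xy_power ab by (intro mon_xy_neq) auto
  ultimately show False
    using factor by auto
qed

end

theorem proposition4p9:
  fixes m :: nat and d :: "nat \<Rightarrow> nat"
  assumes "m \<ge> 2"
    and "\<And>i. 1 \<le> i \<Longrightarrow> i \<le> m \<Longrightarrow> d i > 0"
  shows "prime_ideal_in (polys_in_vars (xy_vars m) :: (nat + nat, 'a::field) mpoly set)
            (ideal_gen_in (polys_in_vars (xy_vars m)) (minors2 m d))
         \<longleftrightarrow> (\<forall>i j. 1 \<le> i \<and> i < j \<and> j \<le> m \<longrightarrow> gcd (d i) (d j) = 1)"
proof -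
  interpret positive_exponents m d
    using assms(2) by unfold_locales
  show ?thesis
  proof
    assume "prime_ideal_in (polys_in_vars (xy_vars m) :: (nat + nat, 'a) mpoly set)
              (ideal_gen_in (polys_in_vars (xy_vars m)) (minors2 m d))"
    then show "\<forall>i j. 1 \<le> i \<and> i < j \<and> j \<le> m \<longrightarrow> gcd (d i) (d j) = 1"
      using not_prime_ideal_minors2 by blast
  next
    assume "\<forall>i j. 1 \<le> i \<and> i < j \<and> j \<le> m \<longrightarrow> gcd (d i) (d j) = 1"
    then interpret coprime_exponents m d
      by unfold_locales auto
    show "prime_ideal_in (polys_in_vars (xy_vars m) :: (nat + nat, 'a) mpoly set)
            (ideal_gen_in (polys_in_vars (xy_vars m)) (minors2 m d))"
      by (rule prime_ideal_minors2)
  qed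
qed

end
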